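(* Let $F$ be a hyperfield whose additive hypergroup is superiorly canonical. Then there exists a Krasner valuation $v$ on $F$ whose norm satisfies $\mathrm{ig}(\rho_v)=\{0\}$, and any two Krasner valuations on $F$ with this property are equivalent.
   Context: A canonical hypergroup is a triple $(H,+,0)$ where $H\neq\emptyset$, $+$ assigns to each pair a subset $x+y\subseteq H$ (for sets $A+B:=\bigcup_{a\in A,b\in B}a+b$), $0\in H$, such that $+$ is associative and commutative, each $x$ has a unique $-x$ with $0\in x+(-x)$, and $z\in x+y\Rightarrow y\in z+(-x)$; write $x-y:=x+(-y)$. A hyperfield is $(F,+,\cdot,0,1)$ with $(F,+,0)$ a canonical hypergroup, $(F,\cdot)$ commutative with $0$ absorbing, $x(y+z)=xy+xz$, and $F\setminus\{0\}$ an abelian group with neutral $1\neq 0$. A canonical hypergroup $H$ is superiorly canonical if: (SCH1) $x\in x+y$ implies $x+y=\{x\}$; (SCH2) $(x+y)\cap(z+t)\neq\emptyset$ implies $x+y\subseteq z+t$ or $z+t\subseteq x+y$; (SCH3) for $x\neq y$ and $z,t\in x-y$, $z-z=t-t$; (SCH4) if $x\in z-z$ and $y\notin z-z$ then $x-x\subseteq y-y$. Valuation on $F$: for an ordered abelian group $\Gamma$ and $\infty>\Gamma$ with $\gamma+\infty=\infty+\gamma=\infty$, a surjective map $v:F\to\Gamma\cup\{\infty\}$ with $vx=\infty\iff x=0$, $v(xy)=vx+vy$, $z\in x+y\Rightarrow vz\ge\min\{vx,vy\}$; $vF:=v(F\setminus\{0\})$. Valuations $v_i:F\to\Gamma_i\cup\{\infty\}$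 are equivalent if $v_2=\sigma\circ v_1$ for an order-preserving group isomorphism $\sigma:\Gamma_1\to\Gamma_2$ ($\sigma(\infty)=\infty$). An initial segment of $\Gamma$ is $\rho\subseteq\Gamma$ with $\delta\in\rho,\gamma<\delta\Rightarrow\gamma\in\rho$; $\rho+\gamma:=\{\delta+\gamma:\delta\in\rho\}$; "$\alpha>\rho+\gamma$" means $\alpha\notin\rho+\gamma$; $\mathrm{ig}(\rho):=\{\gamma\in\Gamma:\rho+\gamma=\rho\}$. Krasner valuation: a valuation $v$ on $F$ such that (KVH1) for all $x,y\in F$ with $0\notin x+y$, $v(x+y)$ is a singleton; (KVH2) there is an initial segment $\rho_v$ of $vF$ with $0\in\rho_v$ (the norm) such that for all $x,y,z,t\in F$ with $z\in x+y$: $t\in x+y$ iff $vs>\rho_v+\min\{vx,vy\}$ for all $s\in z-t$. *)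

theory Defs
  imports Main
begin

text \<open>A hyperfield is given on the whole carrier type 'a by a hyperaddition,
a multiplication, a zero and a one.\<close>

definition setadd :: "('a \<Rightarrow> 'a \<Rightarrow> 'a set) \<Rightarrow> 'a set \<Rightarrow> 'a set \<Rightarrow> 'a set" where
  "setadd hadd A B = (\<Union>a\<in>A. \<Union>b\<in>B. hadd a b)"

definition hneg :: "('a \<Rightarrow> 'a \<Rightarrow> 'a set) \<Rightarrow> 'a \<Rightarrow> 'a \<Rightarrow> 'a" where
  "hneg hadd z x = (THE y. z \<in> hadd x y)"

definition hsub :: "('a \<Rightarrow> 'a \<Rightarrow> 'a set) \<Rightarrow> 'a \<Rightarrow> 'a \<Rightarrow> 'a \<Rightarrow> 'a set" where
  "hsub hadd z x y = hadd x (hneg hadd z y)"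

definition canonical_hypergroup :: "('a \<Rightarrow> 'a \<Rightarrow> 'a set) \<Rightarrow> 'a \<Rightarrow> bool" where
  "canonical_hypergroup hadd z \<longleftrightarrow>
     (\<forall>x y w. setadd hadd (hadd x y) {w} = setadd hadd {x} (hadd y w)) \<and>
     (\<forall>x y. hadd x y = hadd y x) \<and>
     (\<forall>x. \<exists>!y. z \<in> hadd x y) \<and>
     (\<forall>x y w. w \<in> hadd x y \<longrightarrow> y \<in> hadd w (hneg hadd z x))"

definition hyperfield ::
  "('a \<Rightarrow> 'a \<Rightarrow> 'a set) \<Rightarrow> ('a \<Rightarrow> 'a \<Rightarrow> 'a) \<Rightarrow> 'a \<Rightarrow> 'a \<Rightarrow> bool" where
  "hyperfield hadd mul z one \<longleftrightarrow>
     canonical_hypergroup hadd z \<and>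
     (\<forall>x y. mul x y = mul y x) \<and>
     (\<forall>x y w. mul (mul x y) w = mul x (mul y w)) \<and>
     (\<forall>x. mul z x = z) \<and>
     (\<forall>x y w. (mul x) ` (hadd y w) = setadd hadd {mul x y} {mul x w}) \<and>
     one \<noteq> z \<and>
     (\<forall>x. mul one x = x) \<and>
     (\<forall>x y. x \<noteq> z \<longrightarrow> y \<noteq> z \<longrightarrow> mul x y \<noteq> z) \<and>
     (\<forall>x. x \<noteq> z \<longrightarrow> (\<exists>y. y \<noteq> z \<and> mul x y = one))"

definition superiorly_canonical :: "('a \<Rightarrow> 'a \<Rightarrow> 'a set) \<Rightarrow> 'a \<Rightarrow> bool" where
  "superiorly_canonical hadd z \<longleftrightarrow>
     canonical_hypergroup hadd z \<and>
     (\<forall>x y. x \<in> hadd x y \<longrightarrow> hadd x y = {x}) \<and>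
     (\<forall>x y u t. hadd x y \<inter> hadd u t \<noteq> {} \<longrightarrow>
                hadd x y \<subseteq> hadd u t \<or> hadd u t \<subseteq> hadd x y) \<and>
     (\<forall>x y u t. x \<noteq> y \<longrightarrow> u \<in> hsub hadd z x y \<longrightarrow> t \<in> hsub hadd z x y \<longrightarrow>
                hsub hadd z u u = hsub hadd z t t) \<and>
     (\<forall>x y u. x \<in> hsub hadd z u u \<longrightarrow> y \<notin> hsub hadd z u u \<longrightarrow>
                hsub hadd z x x \<subseteq> hsub hadd z y y)"

record 'g ogroup =
  gcarrier :: "'g set"
  gplus :: "'g \<Rightarrow> 'g \<Rightarrow> 'g"
  gzero :: 'g
  gle :: "'g \<Rightarrow> 'g \<Rightarrow> bool"

definition ordered_ab_group :: "'g ogroup \<Rightarrow> bool" where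
  "ordered_ab_group G \<longleftrightarrow>
     gzero G \<in> gcarrier G \<and>
     (\<forall>a\<in>gcarrier G. \<forall>b\<in>gcarrier G. gplus G a b \<in> gcarrier G) \<and>
     (\<forall>a\<in>gcarrier G. \<forall>b\<in>gcarrier G. \<forall>c\<in>gcarrier G.
        gplus G (gplus G a b) c = gplus G a (gplus G b c)) \<and>
     (\<forall>a\<in>gcarrier G. \<forall>b\<in>gcarrier G. gplus G a b = gplus G b a) \<and>
     (\<forall>a\<in>gcarrier G. gplus G a (gzero G) = a) \<and>
     (\<forall>a\<in>gcarrier G. \<exists>b\<in>gcarrier G. gplus G a b = gzero G) \<and>
     (\<forall>a\<in>gcarrier G. gle G a a) \<and>
     (\<forall>a\<in>gcarrier G. \<forall>b\<in>gcarrier G. gle G a b \<longrightarrow> gle G b a \<longrightarrow> a = b) \<and>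
     (\<forall>a\<in>gcarrier G. \<forall>b\<in>gcarrier G. \<forall>c\<in>gcarrier G.
        gle G a b \<longrightarrow> gle G b c \<longrightarrow> gle G a c) \<and>
     (\<forall>a\<in>gcarrier G. \<forall>b\<in>gcarrier G. gle G a b \<or> gle G b a) \<and>
     (\<forall>a\<in>gcarrier G. \<forall>b\<in>gcarrier G. \<forall>c\<in>gcarrier G.
        gle G a b \<longrightarrow> gle G (gplus G a c) (gplus G b c))"

definition glt :: "'g ogroup \<Rightarrow> 'g \<Rightarrow> 'g \<Rightarrow> bool" where
  "glt G a b \<longleftrightarrow> gle G a b \<and> a \<noteq> b"

text \<open>Gamma \<union> {\<infinity>} is modelled by 'g option, None = \<infinity>.\<close>

definition ext_le :: "'g ogroup \<Rightarrow> 'g option \<Rightarrow> 'g option \<Rightarrow> bool" where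
  "ext_le G a b = (case b of None \<Rightarrow> True
                   | Some b' \<Rightarrow> (case a of None \<Rightarrow> False | Some a' \<Rightarrow> gle G a' b'))"

definition ext_plus :: "'g ogroup \<Rightarrow> 'g option \<Rightarrow> 'g option \<Rightarrow> 'g option" where
  "ext_plus G a b = (case a of None \<Rightarrow> None
                     | Some a' \<Rightarrow> (case b of None \<Rightarrow> None | Some b' \<Rightarrow> Some (gplus G a' b')))"

definition ext_min :: "'g ogroup \<Rightarrow> 'g option \<Rightarrow> 'g option \<Rightarrow> 'g option" where
  "ext_min G a b = (if ext_le G a b then a else b)"

definition valuation ::
  "('a \<Rightarrow> 'a \<Rightarrow> 'a set) \<Rightarrow> ('a \<Rightarrow> 'a \<Rightarrow> 'a) \<Rightarrow> 'a \<Rightarrow> 'g ogroup \<Rightarrow> ('a \<Rightarrow> 'g option) \<Rightarrow> bool" where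
  "valuation hadd mul z G v \<longleftrightarrow>
     ordered_ab_group G \<and>
     range v = Some ` gcarrier G \<union> {None} \<and>
     (\<forall>x. v x = None \<longleftrightarrow> x = z) \<and>
     (\<forall>x y. v (mul x y) = ext_plus G (v x) (v y)) \<and>
     (\<forall>x y w. w \<in> hadd x y \<longrightarrow> ext_le G (ext_min G (v x) (v y)) (v w))"

definition value_group :: "'a \<Rightarrow> ('a \<Rightarrow> 'g option) \<Rightarrow> 'g set" where
  "value_group z v = {\<gamma>. \<exists>x. x \<noteq> z \<and> v x = Some \<gamma>}"

definition initial_segment :: "'g ogroup \<Rightarrow> 'g set \<Rightarrow> 'g set \<Rightarrow> bool" where
  "initial_segment G S \<rho> \<longleftrightarrow>
     \<rho> \<subseteq> S \<and> (\<forall>\<delta>\<in>\<rho>. \<forall>\<gamma>\<in>S. glt G \<gamma> \<delta> \<longrightarrow> \<gamma> \<in> \<rho>)"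

definition seg_shift :: "'g ogroup \<Rightarrow> 'g set \<Rightarrow> 'g \<Rightarrow> 'g set" where
  "seg_shift G \<rho> \<gamma> = (\<lambda>\<delta>. gplus G \<delta> \<gamma>) ` \<rho>"

definition ig :: "'g ogroup \<Rightarrow> 'g set \<Rightarrow> 'g set" where
  "ig G \<rho> = {\<gamma>\<in>gcarrier G. seg_shift G \<rho> \<gamma> = \<rho>}"

text \<open>In KVH2, min(vx,vy) is taken in \<Gamma>,
  i.e. x, y not both zero; "\<alpha> > \<rho>+\<gamma>" means \<alpha> \<notin> \<rho>+\<gamma>,
  where \<alpha> = \<infinity> is never in \<rho>+\<gamma>.\<close>

definition krasner_valuation ::
  "('a \<Rightarrow> 'a \<Rightarrow> 'a set) \<Rightarrow> ('a \<Rightarrow> 'a \<Rightarrow> 'a) \<Rightarrow> 'a \<Rightarrow> 'g ogroup \<Rightarrow> ('a \<Rightarrow> 'g option)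
    \<Rightarrow> 'g set \<Rightarrow> bool" where
  "krasner_valuation hadd mul z G v \<rho> \<longleftrightarrow>
     valuation hadd mul z G v \<and>
     (\<forall>x y. z \<notin> hadd x y \<longrightarrow> (\<exists>\<alpha>. v ` hadd x y = {\<alpha>})) \<and>
     initial_segment G (value_group z v) \<rho> \<and> gzero G \<in> \<rho> \<and>
     (\<forall>x y w t \<gamma>. w \<in> hadd x y \<longrightarrow> ext_min G (v x) (v y) = Some \<gamma> \<longrightarrow>
        (t \<in> hadd x y \<longleftrightarrow>
           (\<forall>s \<in> hsub hadd z w t. v s \<notin> Some ` seg_shift G \<rho> \<gamma>)))"

definition equivalent_valuations ::
  "'g ogroup \<Rightarrow> ('a \<Rightarrow> 'g option) \<Rightarrow> 'h ogroup \<Rightarrow> ('a \<Rightarrow> 'h option) \<Rightarrow> bool" where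
  "equivalent_valuations G1 v1 G2 v2 \<longleftrightarrow>
     (\<exists>\<sigma>. bij_betw \<sigma> (gcarrier G1) (gcarrier G2) \<and>
        (\<forall>a\<in>gcarrier G1. \<forall>b\<in>gcarrier G1. \<sigma> (gplus G1 a b) = gplus G2 (\<sigma> a) (\<sigma> b)) \<and>
        (\<forall>a\<in>gcarrier G1. \<forall>b\<in>gcarrier G1. gle G1 a b \<longrightarrow> gle G2 (\<sigma> a) (\<sigma> b)) \<and>
        (\<forall>x. v2 x = map_option \<sigma> (v1 x)))"

end

theory Submission
  imports Defs
begin

text \<open>In a superiorly canonical hyperfield the balls x - x are totally ordered by inclusion and
  satisfy ax - ax = a(x - x), so they form an ordered group under (x - x)(y - y) = xy - xy.
  Taking x - x as the value of x (larger balls being smaller values) and as norm the values of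
  the elements outside 1 - 1 gives a Krasner valuation: for w in x + y, an element t lies in
  x + y iff w - t is contained in the larger of the balls x - x and y - y.

  Conversely, for any Krasner valuation v with norm \<rho>, axiom KVH2 applied to 0 \<in> x - x shows
  that x - x consists of the t with v t > \<rho> + v x. When ig \<rho> = {0} the map \<gamma> \<mapsto> \<rho> + \<gamma> is
  strictly monotone, so v x \<le> v y iff y - y \<subseteq> x - x. Thus all such valuations induce the
  same order on the nonzero elements, and valuations inducing the same order are equivalent.\<close>

section \<open>Superiorly canonical hypergroups and hyperfields\<close>

locale hypergroup =
  fixes hadd :: "'a \<Rightarrow> 'a \<Rightarrow> 'a set" (infixl "\<oplus>" 65) and z :: 'a
  assumes canonical: "canonical_hypergroup hadd z"
begin

abbreviation neg :: "'a \<Rightarrow> 'a" where "neg x \<equiv> hneg hadd z x"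

abbreviation ball :: "'a \<Rightarrow> 'a set" where "ball x \<equiv> hsub hadd z x x"

lemma hadd_assoc_singleton: "setadd hadd (x \<oplus> y) {w} = setadd hadd {x} (y \<oplus> w)"
  using canonical unfolding canonical_hypergroup_def by blast

lemma hadd_commute: "x \<oplus> y = y \<oplus> x"
  using canonical unfolding canonical_hypergroup_def by blast

lemma hadd_reversible: "w \<in> x \<oplus> y \<Longrightarrow> y \<in> w \<oplus> neg x"
  using canonical unfolding canonical_hypergroup_def by blast

lemma zero_in_hadd_neg: "z \<in> x \<oplus> neg x"
  using canonical unfolding canonical_hypergroup_def hneg_def by (metis theI')

lemma neg_unique: "z \<in> x \<oplus> y \<Longrightarrow> y = neg x"
  using canonical zero_in_hadd_neg unfolding canonical_hypergroup_def by blast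

lemma neg_neg [simp]: "neg (neg x) = x"
  using neg_unique zero_in_hadd_neg hadd_commute by metis

lemma mem_zero_hadd: "x \<in> z \<oplus> x"
  using hadd_reversible[OF zero_in_hadd_neg[of "neg x"]] by simp

lemma setadd_singletons [simp]: "setadd hadd {a} {b} = a \<oplus> b"
  unfolding setadd_def by simp

lemma mem_setadd: "x \<in> setadd hadd A C \<longleftrightarrow> (\<exists>a\<in>A. \<exists>c\<in>C. x \<in> a \<oplus> c)"
  unfolding setadd_def by blast

lemma setadd_mono: "A \<subseteq> A' \<Longrightarrow> C \<subseteq> C' \<Longrightarrow> setadd hadd A C \<subseteq> setadd hadd A' C'"
  unfolding setadd_def by blast

lemma setadd_commute: "setadd hadd A C = setadd hadd C A"
  unfolding setadd_def using hadd_commute by blast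

lemma hadd_nonempty: "x \<oplus> y \<noteq> {}"
proof
  assume "x \<oplus> y = {}"
  then have "setadd hadd {x} (y \<oplus> neg y) = {}"
    using hadd_assoc_singleton[of x y "neg y"] unfolding setadd_def by simp
  then show False
    using zero_in_hadd_neg[of y] mem_zero_hadd[of x] hadd_commute unfolding setadd_def by blast
qed

lemma setadd_assoc: "setadd hadd (setadd hadd A C) D = setadd hadd A (setadd hadd C D)"
proof -
  have "(\<exists>e \<in> a \<oplus> c. x \<in> e \<oplus> d) \<longleftrightarrow> (\<exists>f \<in> c \<oplus> d. x \<in> a \<oplus> f)" for x a c d
    using hadd_assoc_singleton[of a c d] unfolding setadd_def by blast
  then show ?thesis by (fastforce simp: mem_setadd)
qed

lemma setadd_interchange:
  "setadd hadd (setadd hadd A C) (setadd hadd D E) =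
    setadd hadd (setadd hadd A D) (setadd hadd C E)"
  by (metis setadd_assoc setadd_commute)

end

locale sc_hypergroup = hypergroup +
  assumes superiorly_canonical: "superiorly_canonical hadd z"
begin

lemma hadd_absorb: "x \<in> x \<oplus> y \<Longrightarrow> x \<oplus> y = {x}"
  using superiorly_canonical unfolding superiorly_canonical_def by blast

lemma hadd_nested:
  "(x \<oplus> y) \<inter> (u \<oplus> t) \<noteq> {} \<Longrightarrow> x \<oplus> y \<subseteq> u \<oplus> t \<or> u \<oplus> t \<subseteq> x \<oplus> y"
  using superiorly_canonical unfolding superiorly_canonical_def by blast

lemma ball_eq_if_mem_hsub:
  "x \<noteq> y \<Longrightarrow> u \<in> hsub hadd z x y \<Longrightarrow> t \<in> hsub hadd z x y \<Longrightarrow> ball u = ball t"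
  using superiorly_canonical unfolding superiorly_canonical_def by blast

lemma ball_subset_ball_if_mem_not_mem: "x \<in> ball u \<Longrightarrow> y \<notin> ball u \<Longrightarrow> ball x \<subseteq> ball y"
  using superiorly_canonical unfolding superiorly_canonical_def by blast

lemma hadd_zero_left [simp]: "z \<oplus> x = {x}"
  using hadd_absorb[of x z] mem_zero_hadd[of x] hadd_commute by metis

lemma neg_zero [simp]: "neg z = z"
  using neg_unique[of z z] by simp

lemma zero_in_ball: "z \<in> ball x"
  unfolding hsub_def by (rule zero_in_hadd_neg)

lemma ball_zero [simp]: "ball z = {z}"
  unfolding hsub_def by simp

lemma ball_linear: "ball x \<subseteq> ball y \<or> ball y \<subseteq> ball x"
  using hadd_nested zero_in_hadd_neg unfolding hsub_def by blast

lemma mem_ball_iff_absorbed: "t \<in> ball x \<longleftrightarrow> x \<oplus> t = {x}"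
proof
  assume "t \<in> ball x"
  then have "x \<in> t \<oplus> x"
    using hadd_reversible[of t "neg x" x] hadd_commute unfolding hsub_def by auto
  then show "x \<oplus> t = {x}" using hadd_absorb hadd_commute by metis
next
  assume "x \<oplus> t = {x}"
  then show "t \<in> ball x" using hadd_reversible[of x x t] unfolding hsub_def by simp
qed

lemma ball_closed: "a \<in> ball x \<Longrightarrow> b \<in> ball x \<Longrightarrow> c \<in> a \<oplus> b \<Longrightarrow> c \<in> ball x"
proof -
  assume a: "a \<in> ball x" and b: "b \<in> ball x" and c: "c \<in> a \<oplus> b"
  have "setadd hadd {x} (a \<oplus> b) = x \<oplus> b"
    using hadd_assoc_singleton[of x a b] a by (simp add: mem_ball_iff_absorbed)
  then have "x \<oplus> c \<subseteq> {x}" using b c unfolding mem_ball_iff_absorbed setadd_def by blast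
  then show ?thesis using hadd_nonempty unfolding mem_ball_iff_absorbed by blast
qed

lemma setadd_ball_ball: "setadd hadd (ball x) (ball x) \<subseteq> ball x"
  unfolding setadd_def using ball_closed by blast

lemma not_mem_ball_self: "x \<noteq> z \<Longrightarrow> x \<notin> ball x"
  using hadd_absorb[of x "neg x"] zero_in_hadd_neg[of x] unfolding hsub_def by auto

end

locale sc_hyperfield = sc_hypergroup +
  fixes mul :: "'a \<Rightarrow> 'a \<Rightarrow> 'a" (infixl "\<cdot>" 70) and one :: 'a
  assumes hyperfield: "hyperfield hadd mul z one"
begin

lemma
  shows mul_commute: "x \<cdot> y = y \<cdot> x"
    and mul_assoc: "x \<cdot> y \<cdot> w = x \<cdot> (y \<cdot> w)"
    and mul_zero_left [simp]: "z \<cdot> x = z"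
    and mul_hadd_distrib: "(\<cdot>) a ` (x \<oplus> y) = a \<cdot> x \<oplus> a \<cdot> y"
    and one_neq_zero: "one \<noteq> z"
    and mul_one_left [simp]: "one \<cdot> x = x"
    and mul_nonzero: "x \<noteq> z \<Longrightarrow> y \<noteq> z \<Longrightarrow> x \<cdot> y \<noteq> z"
    and mul_inverse_exists: "x \<noteq> z \<Longrightarrow> \<exists>y. y \<noteq> z \<and> x \<cdot> y = one"
  using hyperfield unfolding hyperfield_def setadd_singletons by metis+

lemma mul_zero_right [simp]: "x \<cdot> z = z"
  by (subst mul_commute) (rule mul_zero_left)

lemma mul_one_right [simp]: "x \<cdot> one = x"
  by (subst mul_commute) (rule mul_one_left)

definition minv :: "'a \<Rightarrow> 'a" where
  "minv x = (SOME y. y \<noteq> z \<and> x \<cdot> y = one)"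

lemma minv_spec: "x \<noteq> z \<Longrightarrow> minv x \<noteq> z \<and> x \<cdot> minv x = one"
  unfolding minv_def using mul_inverse_exists by (rule someI_ex)

lemma minv_mul_cancel_left: "x \<noteq> z \<Longrightarrow> minv x \<cdot> (x \<cdot> y) = y"
  using minv_spec[of x] by (simp add: mul_assoc[symmetric] mul_commute[of "minv x" x])

lemma mul_minv_cancel_right: "x \<noteq> z \<Longrightarrow> y \<cdot> minv x \<cdot> x = y"
  by (simp add: mul_assoc mul_commute[of "minv x" x] minv_spec)

lemma inj_mul: "a \<noteq> z \<Longrightarrow> inj ((\<cdot>) a)"
  by (rule injI) (metis minv_mul_cancel_left)

lemma mul_neg_one: "neg one \<cdot> x = neg x"
proof -
  have "z \<in> (\<cdot>) x ` (one \<oplus> neg one)"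
    using zero_in_hadd_neg[of one] mul_zero_right[of x] by (metis imageI)
  then have "x \<cdot> neg one = neg x"
    by (intro neg_unique) (simp add: mul_hadd_distrib)
  then show ?thesis by (simp add: mul_commute)
qed

lemma neg_mul_right: "neg (a \<cdot> b) = a \<cdot> neg b"
proof -
  have "neg (a \<cdot> b) = neg one \<cdot> a \<cdot> b" by (subst mul_assoc) (rule mul_neg_one[symmetric])
  also have "\<dots> = a \<cdot> neg one \<cdot> b" by (simp only: mul_commute[of "neg one" a])
  finally show ?thesis by (subst (asm) mul_assoc) (simp only: mul_neg_one)
qed

lemma neg_image_hadd: "neg ` (x \<oplus> y) = neg x \<oplus> neg y"
proof -
  have "(\<cdot>) (neg one) = neg" by (rule ext) (rule mul_neg_one)
  then show ?thesis using mul_hadd_distrib[of "neg one" x y] by (simp add: mul_neg_one)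
qed

lemma ball_mul: "ball (a \<cdot> x) = (\<cdot>) a ` ball x"
  unfolding hsub_def by (simp add: mul_hadd_distrib neg_mul_right)

lemma neg_mem_ball: "t \<in> ball x \<Longrightarrow> neg t \<in> ball x"
  using neg_image_hadd[of x "neg x"] hadd_commute[of x "neg x"] unfolding hsub_def by auto

lemma hadd_diff_subset_balls:
  assumes "a \<in> x \<oplus> y" and "b \<in> x \<oplus> y"
  shows "a \<oplus> neg b \<subseteq> setadd hadd (ball x) (ball y)"
proof -
  have "neg b \<in> neg x \<oplus> neg y" using assms(2) neg_image_hadd by blast
  then have "a \<oplus> neg b \<subseteq> setadd hadd (x \<oplus> y) (neg x \<oplus> neg y)"
    using assms(1) unfolding setadd_def by blast
  also have "\<dots> = setadd hadd (x \<oplus> neg x) (y \<oplus> neg y)"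
    using setadd_interchange[of "{x}" "{y}" "{neg x}" "{neg y}"] by simp
  finally show ?thesis unfolding hsub_def .
qed

lemma hadd_ball_subset: "w \<in> x \<oplus> y \<Longrightarrow> b \<in> ball x \<Longrightarrow> w \<oplus> b \<subseteq> x \<oplus> y"
  using hadd_assoc_singleton[of y x b] hadd_commute[of x y]
  unfolding mem_ball_iff_absorbed setadd_def by auto

lemma mem_hadd_if_diff_subset_ball:
  assumes w: "w \<in> x \<oplus> y" and sub: "w \<oplus> neg t \<subseteq> ball x"
  shows "t \<in> x \<oplus> y"
proof -
  obtain s where s: "s \<in> w \<oplus> neg t" using hadd_nonempty by blast
  then have "w \<in> s \<oplus> t" using hadd_reversible[of s "neg t" w] hadd_commute by simp
  then have "t \<in> w \<oplus> neg s" using hadd_reversible hadd_commute by metis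
  moreover have "neg s \<in> ball x" using s sub neg_mem_ball by blast
  ultimately show ?thesis using hadd_ball_subset[OF w] by blast
qed

text \<open>With c the summand of larger ball, this is axiom KVH2 for the canonical valuation.\<close>

lemma mem_hadd_iff_diff_subset_ball:
  assumes w: "w \<in> x \<oplus> y" and c: "c = x \<or> c = y"
    and sub: "ball x \<subseteq> ball c" "ball y \<subseteq> ball c"
  shows "t \<in> x \<oplus> y \<longleftrightarrow> w \<oplus> neg t \<subseteq> ball c"
proof
  assume "t \<in> x \<oplus> y"
  then have "w \<oplus> neg t \<subseteq> setadd hadd (ball x) (ball y)" by (rule hadd_diff_subset_balls[OF w])
  also have "\<dots> \<subseteq> setadd hadd (ball c) (ball c)" using sub by (rule setadd_mono)
  finally show "w \<oplus> neg t \<subseteq> ball c" using setadd_ball_ball by blast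
next
  assume "w \<oplus> neg t \<subseteq> ball c"
  then show "t \<in> x \<oplus> y"
    using c mem_hadd_if_diff_subset_ball[OF w] mem_hadd_if_diff_subset_ball[of w y x]
      w hadd_commute[of x y] by auto
qed

lemma ball_mul_unit: "ball u = ball one \<Longrightarrow> ball (u \<cdot> c) = ball c"
  using ball_mul[of c u] ball_mul[of c one] by (simp only: mul_commute[of u c] mul_one_right)

lemma mem_ball_if_same_ball:
  assumes s: "s \<in> ball c" and eq: "ball s' = ball s" and "s \<noteq> z"
  shows "s' \<in> ball c"
proof -
  define u where "u = s' \<cdot> minv s"
  have us: "u \<cdot> s = s'" unfolding u_def using \<open>s \<noteq> z\<close> by (rule mul_minv_cancel_right)
  have "(\<cdot>) s ` ball u = ball (u \<cdot> s)" by (simp only: ball_mul mul_commute[of u s])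
  also have "\<dots> = (\<cdot>) s ` ball one" using us eq ball_mul[of s one] by simp
  finally have "ball u = ball one" using inj_mul[OF \<open>s \<noteq> z\<close>] by (simp add: inj_image_eq_iff)
  moreover have "s' \<in> ball (u \<cdot> c)" using s us ball_mul[of u c] by blast
  ultimately show ?thesis by (simp add: ball_mul_unit)
qed

lemma mul_mem_ball_iff: "c \<noteq> z \<Longrightarrow> t \<cdot> c \<in> ball c \<longleftrightarrow> t \<in> ball one"
  using ball_mul[of c one] inj_mul[of c] by (simp add: mul_commute[of t c] inj_image_mem_iff)

lemma mem_values_outside_ball_iff:
  "t \<noteq> z \<Longrightarrow> ball t \<in> {ball s | s. s \<noteq> z \<and> s \<notin> ball c} \<longleftrightarrow> t \<notin> ball c"
  using mem_ball_if_same_ball by blast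

end

lemma sc_hyperfieldI:
  assumes "hyperfield hadd mul z one" and "superiorly_canonical hadd z"
  shows "sc_hyperfield hadd z mul one"
proof
  show "canonical_hypergroup hadd z" using assms(1) unfolding hyperfield_def by (rule conjunct1)
qed (rule assms)+

section \<open>The canonical Krasner valuation\<close>

context sc_hyperfield
begin

definition ball_values :: "'a set set" where
  "ball_values = {ball x | x. x \<noteq> z}"

definition ball_rep :: "'a set \<Rightarrow> 'a" where
  "ball_rep S = (SOME x. x \<noteq> z \<and> ball x = S)"

definition ball_mult :: "'a set \<Rightarrow> 'a set \<Rightarrow> 'a set" where
  "ball_mult S T = ball (ball_rep S \<cdot> ball_rep T)"

definition canonical_group :: "'a set ogroup" where
  "canonical_group = \<lparr>gcarrier = ball_values, gplus = ball_mult, gzero = ball one,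
     gle = (\<lambda>S T. T \<subseteq> S)\<rparr>"

definition canonical_valuation :: "'a \<Rightarrow> 'a set option" where
  "canonical_valuation x = (if x = z then None else Some (ball x))"

definition canonical_norm :: "'a set set" where
  "canonical_norm = {ball t | t. t \<noteq> z \<and> t \<notin> ball one}"

lemma canonical_group_simps [simp]:
  "gcarrier canonical_group = ball_values" "gplus canonical_group = ball_mult"
  "gzero canonical_group = ball one" "gle canonical_group S T \<longleftrightarrow> T \<subseteq> S"
  unfolding canonical_group_def by simp_all

lemma ball_rep_spec: "x \<noteq> z \<Longrightarrow> ball_rep (ball x) \<noteq> z \<and> ball (ball_rep (ball x)) = ball x"
  unfolding ball_rep_def by (rule someI[of _ x]) simp

lemma ball_mul_cong: "ball x = ball x' \<Longrightarrow> ball (x \<cdot> y) = ball (x' \<cdot> y)"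
  by (simp add: ball_mul mul_commute[of _ y])

lemma ball_mult_ball [simp]: "x \<noteq> z \<Longrightarrow> y \<noteq> z \<Longrightarrow> ball_mult (ball x) (ball y) = ball (x \<cdot> y)"
  unfolding ball_mult_def using ball_rep_spec[of x] ball_rep_spec[of y] ball_mul_cong mul_commute
  by metis

lemma ball_in_ball_values: "x \<noteq> z \<Longrightarrow> ball x \<in> ball_values"
  unfolding ball_values_def by blast

lemma ball_ball_values: "(\<forall>S\<in>ball_values. P S) \<longleftrightarrow> (\<forall>x. x \<noteq> z \<longrightarrow> P (ball x))"
  unfolding ball_values_def by blast

lemma bex_ball_values: "(\<exists>S\<in>ball_values. P S) \<longleftrightarrow> (\<exists>x. x \<noteq> z \<and> P (ball x))"
  unfolding ball_values_def by blast

lemma ordered_ab_group_canonical_group: "ordered_ab_group canonical_group"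
  unfolding ordered_ab_group_def canonical_group_simps ball_ball_values
proof (intro conjI allI impI)
  show "ball one \<in> ball_values" using one_neq_zero by (rule ball_in_ball_values)
  fix x y w
  assume x: "x \<noteq> z"
  then show "ball_mult (ball x) (ball one) = ball x" using one_neq_zero by simp
  show "ball x \<subseteq> ball x" by simp
  show "\<exists>S\<in>ball_values. ball_mult (ball x) S = ball one"
    unfolding bex_ball_values using minv_spec[OF x] x by (metis ball_mult_ball)
  assume y: "y \<noteq> z"
  show "ball_mult (ball x) (ball y) \<in> ball_values" using x y mul_nonzero ball_in_ball_values by simp
  show "ball_mult (ball x) (ball y) = ball_mult (ball y) (ball x)"
    using x y by (simp add: mul_commute)
  show "ball y \<subseteq> ball x \<or> ball x \<subseteq> ball y" using ball_linear by blast
  show "ball y \<subseteq> ball x \<Longrightarrow> ball x \<subseteq> ball y \<Longrightarrow> ball x = ball y" by blast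
  assume w: "w \<noteq> z"
  show "ball_mult (ball_mult (ball x) (ball y)) (ball w) =
      ball_mult (ball x) (ball_mult (ball y) (ball w))"
    using x y w mul_nonzero by (simp add: mul_assoc)
  show "ball y \<subseteq> ball x \<Longrightarrow> ball w \<subseteq> ball y \<Longrightarrow> ball w \<subseteq> ball x" by blast
  show "ball y \<subseteq> ball x \<Longrightarrow> ball_mult (ball y) (ball w) \<subseteq> ball_mult (ball x) (ball w)"
    using x y w by (simp add: mul_commute[of _ w] ball_mul image_mono)
qed

lemma canonical_valuation_zero [simp]: "canonical_valuation z = None"
  unfolding canonical_valuation_def by simp

lemma canonical_valuation_nonzero [simp]: "x \<noteq> z \<Longrightarrow> canonical_valuation x = Some (ball x)"
  unfolding canonical_valuation_def by simp

lemma value_group_canonical_valuation: "value_group z canonical_valuation = ball_values"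
  unfolding value_group_def ball_values_def canonical_valuation_def by auto

lemma ext_min_canonical_valuation:
  assumes "ext_min canonical_group (canonical_valuation x) (canonical_valuation y) = Some g"
  obtains c where "c = x \<or> c = y" "c \<noteq> z" "g = ball c" "ball x \<subseteq> ball c" "ball y \<subseteq> ball c"
  using assms zero_in_ball[of x] zero_in_ball[of y] ball_linear[of x y]
  by (cases "x = z"; cases "y = z") (auto simp: ext_min_def ext_le_def split: if_splits)

lemma valuation_canonical_valuation: "valuation hadd mul z canonical_group canonical_valuation"
  unfolding valuation_def
proof (intro conjI allI impI)
  show "ordered_ab_group canonical_group" by (rule ordered_ab_group_canonical_group)
  show "range canonical_valuation = Some ` gcarrier canonical_group \<union> {None}"
    unfolding canonical_group_simps ball_values_def canonical_valuation_def by auto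
  fix x y w
  show "canonical_valuation x = None \<longleftrightarrow> x = z" unfolding canonical_valuation_def by simp
  show "canonical_valuation (x \<cdot> y) =
      ext_plus canonical_group (canonical_valuation x) (canonical_valuation y)"
    using mul_nonzero by (cases "x = z"; cases "y = z") (auto simp: ext_plus_def)
  assume w: "w \<in> x \<oplus> y"
  show "ext_le canonical_group
      (ext_min canonical_group (canonical_valuation x) (canonical_valuation y))
      (canonical_valuation w)"
  proof (cases "w = z")
    case True
    then show ?thesis by (simp add: ext_le_def)
  next
    case False
    then have "x \<noteq> z \<or> y \<noteq> z" using w by auto
    then have "ext_min canonical_group (canonical_valuation x) (canonical_valuation y) \<noteq> None"
      by (cases "x = z"; cases "y = z") (auto simp: ext_min_def ext_le_def)
    then obtain g
      where g: "ext_min canonical_group (canonical_valuation x) (canonical_valuation y) = Some g"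
      by auto
    then obtain c where c: "c \<noteq> z" "g = ball c" "ball x \<subseteq> ball c" "ball y \<subseteq> ball c"
      by (rule ext_min_canonical_valuation)
    have "ball w \<subseteq> setadd hadd (ball x) (ball y)"
      using hadd_diff_subset_balls[OF w w] unfolding hsub_def .
    also have "\<dots> \<subseteq> setadd hadd (ball c) (ball c)" using c by (intro setadd_mono)
    also have "\<dots> \<subseteq> ball c" by (rule setadd_ball_ball)
    finally show ?thesis using g c False by (simp add: ext_le_def)
  qed
qed

lemma canonical_valuation_const_on_hadd:
  assumes nz: "z \<notin> x \<oplus> y"
  shows "\<exists>\<alpha>. canonical_valuation ` (x \<oplus> y) = {\<alpha>}"
proof -
  obtain a where a: "a \<in> x \<oplus> y" using hadd_nonempty by blast
  have xy: "x \<noteq> neg y" using nz zero_in_hadd_neg[of y] hadd_commute[of y x] by auto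
  have sum: "hsub hadd z x (neg y) = x \<oplus> y" unfolding hsub_def by simp
  have "canonical_valuation t = Some (ball a)" if t: "t \<in> x \<oplus> y" for t
  proof -
    have "ball t = ball a" using ball_eq_if_mem_hsub[OF xy, of t a] t a unfolding sum by blast
    moreover have "t \<noteq> z" using t nz by blast
    ultimately show ?thesis by simp
  qed
  then have "canonical_valuation ` (x \<oplus> y) = {Some (ball a)}" using a by force
  then show ?thesis by blast
qed

lemma initial_segment_canonical_norm:
  "initial_segment canonical_group (value_group z canonical_valuation) canonical_norm"
  unfolding initial_segment_def value_group_canonical_valuation
proof (intro conjI ballI impI)
  show "canonical_norm \<subseteq> ball_values" unfolding canonical_norm_def ball_values_def by blast
  fix d g assume d: "d \<in> canonical_norm" and g: "g \<in> ball_values" and lt: "glt canonical_group g d"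
  obtain t where t: "t \<noteq> z" "t \<notin> ball one" "d = ball t"
    using d unfolding canonical_norm_def by blast
  obtain s where s: "s \<noteq> z" "g = ball s" using g unfolding ball_values_def by blast
  have "\<not> ball s \<subseteq> ball t" using lt t s unfolding glt_def by auto
  then have "s \<notin> ball one" using ball_subset_ball_if_mem_not_mem t by blast
  then show "g \<in> canonical_norm" unfolding canonical_norm_def using s by blast
qed

lemma ball_one_in_canonical_norm: "ball one \<in> canonical_norm"
  unfolding canonical_norm_def using one_neq_zero not_mem_ball_self by blast

lemma seg_shift_canonical_norm:
  assumes c: "c \<noteq> z"
  shows "seg_shift canonical_group canonical_norm (ball c) = {ball s | s. s \<noteq> z \<and> s \<notin> ball c}"
proof (rule set_eqI, rule iffI)
  fix S assume "S \<in> seg_shift canonical_group canonical_norm (ball c)"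
  then obtain t where "t \<noteq> z" "t \<notin> ball one" "S = ball (t \<cdot> c)"
    unfolding seg_shift_def canonical_norm_def using c by auto
  then show "S \<in> {ball s | s. s \<noteq> z \<and> s \<notin> ball c}"
    using c mul_nonzero mul_mem_ball_iff by blast
next
  fix S assume "S \<in> {ball s | s. s \<noteq> z \<and> s \<notin> ball c}"
  then obtain s where s: "s \<noteq> z" "s \<notin> ball c" "S = ball s" by blast
  define t where "t = s \<cdot> minv c"
  have tc: "t \<cdot> c = s" unfolding t_def using c by (rule mul_minv_cancel_right)
  then have "t \<noteq> z" "t \<notin> ball one" using s c mul_mem_ball_iff by auto
  then have "ball t \<in> canonical_norm" unfolding canonical_norm_def by blast
  moreover have "S = ball_mult (ball t) (ball c)" using \<open>t \<noteq> z\<close> c tc s by simp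
  ultimately show "S \<in> seg_shift canonical_group canonical_norm (ball c)"
    unfolding seg_shift_def by simp
qed

lemma canonical_valuation_notin_seg_shift_iff:
  "c \<noteq> z \<Longrightarrow>
    canonical_valuation s \<notin> Some ` seg_shift canonical_group canonical_norm (ball c) \<longleftrightarrow> s \<in> ball c"
  using zero_in_ball[of c] mem_values_outside_ball_iff[of s c]
  by (cases "s = z") (auto simp: seg_shift_canonical_norm)

lemma krasner_canonical_valuation:
  "krasner_valuation hadd mul z canonical_group canonical_valuation canonical_norm"
  unfolding krasner_valuation_def
proof (intro conjI allI impI)
  fix x y w t g
  assume w: "w \<in> x \<oplus> y"
    and g: "ext_min canonical_group (canonical_valuation x) (canonical_valuation y) = Some g"
  obtain c where c: "c = x \<or> c = y" "c \<noteq> z" "g = ball c" "ball x \<subseteq> ball c" "ball y \<subseteq> ball c"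
    using g by (rule ext_min_canonical_valuation)
  show "t \<in> x \<oplus> y \<longleftrightarrow>
      (\<forall>s\<in>hsub hadd z w t.
        canonical_valuation s \<notin> Some ` seg_shift canonical_group canonical_norm g)"
    unfolding mem_hadd_iff_diff_subset_ball[OF w c(1,4,5)] hsub_def[of hadd z w t] c(3)
    using canonical_valuation_notin_seg_shift_iff[OF c(2)] by blast
qed (use valuation_canonical_valuation canonical_valuation_const_on_hadd
      initial_segment_canonical_norm ball_one_in_canonical_norm in auto)

lemma ig_canonical_norm: "ig canonical_group canonical_norm = {ball one}"
proof (intro equalityI subsetI)
  have norm: "seg_shift canonical_group canonical_norm (ball one) = canonical_norm"
    using seg_shift_canonical_norm[OF one_neq_zero] unfolding canonical_norm_def by simp
  then show "S \<in> ig canonical_group canonical_norm" if "S \<in> {ball one}" for S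
    using that one_neq_zero ball_in_ball_values unfolding ig_def by simp
  fix S assume "S \<in> ig canonical_group canonical_norm"
  then obtain c where c: "c \<noteq> z" "S = ball c"
    and shift: "seg_shift canonical_group canonical_norm (ball c) = canonical_norm"
    unfolding ig_def canonical_group_simps ball_values_def by blast
  have "ball c = ball one"
    using canonical_valuation_notin_seg_shift_iff[OF c(1)]
      canonical_valuation_notin_seg_shift_iff[OF one_neq_zero]
    unfolding shift norm by (intro set_eqI) simp
  then show "S \<in> {ball one}" using c by simp
qed

end

section \<open>Ordered abelian groups and valuations\<close>

locale ordered_group =
  fixes G :: "'g ogroup"
  assumes ordered_ab_group: "ordered_ab_group G"
begin

abbreviation gadd :: "'g \<Rightarrow> 'g \<Rightarrow> 'g" (infixl "+\<^sub>G" 65) where "a +\<^sub>G b \<equiv> gplus G a b"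

abbreviation gless_eq :: "'g \<Rightarrow> 'g \<Rightarrow> bool" (infix "\<le>\<^sub>G" 50) where "a \<le>\<^sub>G b \<equiv> gle G a b"

lemma
  shows gzero_closed: "gzero G \<in> gcarrier G"
    and gadd_closed: "a \<in> gcarrier G \<Longrightarrow> b \<in> gcarrier G \<Longrightarrow> a +\<^sub>G b \<in> gcarrier G"
    and gadd_assoc: "a \<in> gcarrier G \<Longrightarrow> b \<in> gcarrier G \<Longrightarrow> c \<in> gcarrier G \<Longrightarrow>
      a +\<^sub>G b +\<^sub>G c = a +\<^sub>G (b +\<^sub>G c)"
    and gadd_commute: "a \<in> gcarrier G \<Longrightarrow> b \<in> gcarrier G \<Longrightarrow> a +\<^sub>G b = b +\<^sub>G a"
    and gadd_zero_right: "a \<in> gcarrier G \<Longrightarrow> a +\<^sub>G gzero G = a"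
    and gneg_exists: "a \<in> gcarrier G \<Longrightarrow> \<exists>b\<in>gcarrier G. a +\<^sub>G b = gzero G"
    and gle_refl: "a \<in> gcarrier G \<Longrightarrow> a \<le>\<^sub>G a"
    and gle_antisym: "a \<in> gcarrier G \<Longrightarrow> b \<in> gcarrier G \<Longrightarrow> a \<le>\<^sub>G b \<Longrightarrow> b \<le>\<^sub>G a \<Longrightarrow> a = b"
    and gle_linear: "a \<in> gcarrier G \<Longrightarrow> b \<in> gcarrier G \<Longrightarrow> a \<le>\<^sub>G b \<or> b \<le>\<^sub>G a"
    and gadd_right_mono: "a \<in> gcarrier G \<Longrightarrow> b \<in> gcarrier G \<Longrightarrow> c \<in> gcarrier G \<Longrightarrow>
      a \<le>\<^sub>G b \<Longrightarrow> a +\<^sub>G c \<le>\<^sub>G b +\<^sub>G c"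
  using ordered_ab_group unfolding ordered_ab_group_def by metis+

lemma gadd_zero_left: "a \<in> gcarrier G \<Longrightarrow> gzero G +\<^sub>G a = a"
  by (simp add: gadd_commute[OF gzero_closed] gadd_zero_right)

definition gneg :: "'g \<Rightarrow> 'g" where
  "gneg a = (SOME b. b \<in> gcarrier G \<and> a +\<^sub>G b = gzero G)"

lemma gneg_closed: "a \<in> gcarrier G \<Longrightarrow> gneg a \<in> gcarrier G"
  and gadd_gneg_right: "a \<in> gcarrier G \<Longrightarrow> a +\<^sub>G gneg a = gzero G"
  unfolding gneg_def using someI_ex[OF gneg_exists[unfolded Bex_def]] by blast+

lemma gadd_gneg_left: "a \<in> gcarrier G \<Longrightarrow> gneg a +\<^sub>G a = gzero G"
  by (simp add: gadd_commute[OF gneg_closed] gadd_gneg_right)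

lemma gadd_right_cancel:
  assumes "a \<in> gcarrier G" "b \<in> gcarrier G" "c \<in> gcarrier G" and "a +\<^sub>G c = b +\<^sub>G c"
  shows "a = b"
proof -
  have "a = a +\<^sub>G c +\<^sub>G gneg c"
    using assms(1,3) gadd_assoc gneg_closed gadd_gneg_right gadd_zero_right by simp
  also have "\<dots> = b +\<^sub>G c +\<^sub>G gneg c" using assms(4) by simp
  also have "\<dots> = b" using assms(2,3) gadd_assoc gneg_closed gadd_gneg_right gadd_zero_right by simp
  finally show ?thesis .
qed

lemma double_eq_zero: "a \<in> gcarrier G \<Longrightarrow> a +\<^sub>G a = gzero G \<Longrightarrow> a = gzero G"
  using gle_linear[OF gzero_closed, of a] gadd_right_mono[OF gzero_closed, of a a]
    gadd_right_mono[of a "gzero G" a] gle_antisym[OF _ gzero_closed, of a] gzero_closed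
  by (auto simp: gadd_zero_left)

lemma seg_shift_seg_shift:
  "\<rho> \<subseteq> gcarrier G \<Longrightarrow> a \<in> gcarrier G \<Longrightarrow> b \<in> gcarrier G \<Longrightarrow>
    seg_shift G (seg_shift G \<rho> a) b = seg_shift G \<rho> (a +\<^sub>G b)"
  unfolding seg_shift_def image_image using gadd_assoc by (intro image_cong) auto

lemma seg_shift_zero: "\<rho> \<subseteq> gcarrier G \<Longrightarrow> seg_shift G \<rho> (gzero G) = \<rho>"
  unfolding seg_shift_def using gadd_zero_right by (simp add: subset_iff)

lemma seg_shift_closed:
  "\<rho> \<subseteq> gcarrier G \<Longrightarrow> a \<in> gcarrier G \<Longrightarrow> seg_shift G \<rho> a \<subseteq> gcarrier G"
  unfolding seg_shift_def using gadd_closed by blast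

lemma seg_shift_mono:
  assumes \<rho>: "initial_segment G (gcarrier G) \<rho>"
    and a: "a \<in> gcarrier G" and b: "b \<in> gcarrier G" and ab: "a \<le>\<^sub>G b"
  shows "seg_shift G \<rho> a \<subseteq> seg_shift G \<rho> b"
proof
  fix \<alpha> assume "\<alpha> \<in> seg_shift G \<rho> a"
  then obtain d where d: "d \<in> \<rho>" "\<alpha> = d +\<^sub>G a" unfolding seg_shift_def by blast
  have dc: "d \<in> gcarrier G" using d \<rho> unfolding initial_segment_def by blast
  define e where "e = a +\<^sub>G gneg b"
  have ec: "e \<in> gcarrier G" unfolding e_def using a b gadd_closed gneg_closed by blast
  have "e \<le>\<^sub>G gzero G"
    unfolding e_def using gadd_right_mono[OF a b gneg_closed[OF b] ab] gadd_gneg_right[OF b] by simp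
  then have "d +\<^sub>G e \<le>\<^sub>G d"
    using gadd_right_mono[OF ec gzero_closed dc]
    by (simp add: gadd_commute[OF ec dc] gadd_zero_left[OF dc])
  then have "d +\<^sub>G e \<in> \<rho>"
    using \<rho> d dc ec gadd_closed unfolding initial_segment_def glt_def by (cases "d +\<^sub>G e = d") auto
  moreover have "d +\<^sub>G e +\<^sub>G b = \<alpha>"
    unfolding e_def d(2)
    using dc a b gneg_closed gadd_closed gadd_assoc gadd_gneg_left gadd_zero_right
    by simp
  ultimately show "\<alpha> \<in> seg_shift G \<rho> b" unfolding seg_shift_def by force
qed

lemma seg_shift_inj:
  assumes ig: "ig G \<rho> = {gzero G}" and \<rho>: "\<rho> \<subseteq> gcarrier G"
    and a: "a \<in> gcarrier G" and b: "b \<in> gcarrier G"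
    and eq: "seg_shift G \<rho> a = seg_shift G \<rho> b"
  shows "a = b"
proof -
  have nb: "gneg b \<in> gcarrier G" using b by (rule gneg_closed)
  have "seg_shift G \<rho> (a +\<^sub>G gneg b) = seg_shift G (seg_shift G \<rho> b) (gneg b)"
    using seg_shift_seg_shift[OF \<rho> a nb] eq by simp
  also have "\<dots> = \<rho>"
    using seg_shift_seg_shift[OF \<rho> b nb] seg_shift_zero[OF \<rho>] gadd_gneg_right[OF b] by simp
  finally have "a +\<^sub>G gneg b \<in> ig G \<rho>" unfolding ig_def using a nb gadd_closed by blast
  then have "a +\<^sub>G gneg b = b +\<^sub>G gneg b" using ig gadd_gneg_right[OF b] by simp
  then show ?thesis using gadd_right_cancel a b nb by blast
qed

lemma seg_shift_subset_iff:
  assumes \<rho>: "initial_segment G (gcarrier G) \<rho>" and ig: "ig G \<rho> = {gzero G}"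
    and a: "a \<in> gcarrier G" and b: "b \<in> gcarrier G"
  shows "seg_shift G \<rho> a \<subseteq> seg_shift G \<rho> b \<longleftrightarrow> a \<le>\<^sub>G b"
proof
  assume sub: "seg_shift G \<rho> a \<subseteq> seg_shift G \<rho> b"
  show "a \<le>\<^sub>G b"
  proof (rule ccontr)
    assume "\<not> a \<le>\<^sub>G b"
    then have "b \<le>\<^sub>G a" using gle_linear a b by blast
    then have "seg_shift G \<rho> a = seg_shift G \<rho> b" using sub seg_shift_mono[OF \<rho> b a] by blast
    then have "a = b" using seg_shift_inj[OF ig _ a b] \<rho> unfolding initial_segment_def by blast
    then show False using \<open>\<not> a \<le>\<^sub>G b\<close> gle_refl a by blast
  qed
qed (rule seg_shift_mono[OF \<rho> a b])

end

locale valued = ordered_group G for G :: "'g ogroup" +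
  fixes hadd :: "'a \<Rightarrow> 'a \<Rightarrow> 'a set" and mul :: "'a \<Rightarrow> 'a \<Rightarrow> 'a" and z :: 'a
    and v :: "'a \<Rightarrow> 'g option"
  assumes valuation: "valuation hadd mul z G v"
begin

lemma
  shows val_eq_None_iff: "v x = None \<longleftrightarrow> x = z"
    and val_mul: "v (mul x y) = ext_plus G (v x) (v y)"
    and val_range: "range v = Some ` gcarrier G \<union> {None}"
  using valuation unfolding valuation_def by metis+

lemma val_Some_closed: "v x = Some a \<Longrightarrow> a \<in> gcarrier G"
  using rangeI[of v x] unfolding val_range by auto

lemma val_nonzero: "x \<noteq> z \<Longrightarrow> \<exists>a\<in>gcarrier G. v x = Some a"
  using val_eq_None_iff val_Some_closed by (cases "v x") auto

lemma val_surj: "a \<in> gcarrier G \<Longrightarrow> \<exists>x. v x = Some a"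
proof -
  assume "a \<in> gcarrier G"
  then have "Some a \<in> range v" unfolding val_range by blast
  then show ?thesis by auto
qed

lemma val_mul_Some: "v x = Some a \<Longrightarrow> v y = Some b \<Longrightarrow> v (mul x y) = Some (a +\<^sub>G b)"
  by (simp add: val_mul ext_plus_def)

lemma value_group_eq: "value_group z v = gcarrier G"
proof (intro equalityI subsetI)
  show "a \<in> gcarrier G" if "a \<in> value_group z v" for a
    using that val_Some_closed unfolding value_group_def by blast
  show "a \<in> value_group z v" if "a \<in> gcarrier G" for a
    using val_surj[OF that] val_eq_None_iff unfolding value_group_def by force
qed

end

lemma valuedI:
  assumes "valuation hadd mul z G v"
  shows "valued G hadd mul z v"
proof
  show "ordered_ab_group G" using assms unfolding valuation_def by (rule conjunct1)
qed (rule assms)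

lemma value_map_if_same_order:
  assumes v1: "valuation hadd mul z G1 v1" and v2: "valuation hadd mul z G2 v2"
    and same_order: "\<And>x y a b c d. v1 x = Some a \<Longrightarrow> v1 y = Some b \<Longrightarrow>
      v2 x = Some c \<Longrightarrow> v2 y = Some d \<Longrightarrow> gle G1 a b \<longleftrightarrow> gle G2 c d"
  shows "\<exists>\<sigma>. \<forall>x a. v1 x = Some a \<longrightarrow> v2 x = Some (\<sigma> a)"
proof -
  interpret V1: valued G1 hadd mul z v1 using v1 by (rule valuedI)
  interpret V2: valued G2 hadd mul z v2 using v2 by (rule valuedI)
  have Some_iff: "(\<exists>a. v1 x = Some a) \<longleftrightarrow> (\<exists>c. v2 x = Some c)" for x
    using V1.val_eq_None_iff[of x] V2.val_eq_None_iff[of x] by auto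
  have same_value: "v2 x = v2 y" if xy: "v1 x = Some a" "v1 y = Some a" for x y a
  proof -
    obtain c d where cd: "v2 x = Some c" "v2 y = Some d" using xy Some_iff by blast
    have "gle G1 a a" using V1.gle_refl[OF V1.val_Some_closed[OF xy(1)]] .
    then have "gle G2 c d" "gle G2 d c"
      using same_order[OF xy cd] same_order[OF xy(2,1) cd(2,1)] by blast+
    then have "c = d"
      by (rule V2.gle_antisym[OF V2.val_Some_closed[OF cd(1)] V2.val_Some_closed[OF cd(2)]])
    then show ?thesis using cd by simp
  qed
  define \<sigma> where "\<sigma> a = the (v2 (SOME x. v1 x = Some a))" for a
  have "v2 x = Some (\<sigma> a)" if x: "v1 x = Some a" for x a
  proof -
    have "v1 (SOME x. v1 x = Some a) = Some a" using x by (rule someI)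
    then have "v2 (SOME x. v1 x = Some a) = v2 x" using same_value x by blast
    then show ?thesis unfolding \<sigma>_def using x Some_iff by force
  qed
  then show ?thesis by blast
qed

lemma equivalent_valuations_if_same_order:
  assumes v1: "valuation hadd mul z G1 v1" and v2: "valuation hadd mul z G2 v2"
    and same_order: "\<And>x y a b c d. v1 x = Some a \<Longrightarrow> v1 y = Some b \<Longrightarrow>
      v2 x = Some c \<Longrightarrow> v2 y = Some d \<Longrightarrow> gle G1 a b \<longleftrightarrow> gle G2 c d"
  shows "equivalent_valuations G1 v1 G2 v2"
proof -
  interpret V1: valued G1 hadd mul z v1 using v1 by (rule valuedI)
  interpret V2: valued G2 hadd mul z v2 using v2 by (rule valuedI)
  have "\<exists>\<sigma>. \<forall>x a. v1 x = Some a \<longrightarrow> v2 x = Some (\<sigma> a)"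
    by (rule value_map_if_same_order[OF v1 v2]) (rule same_order)
  then obtain \<sigma> where \<sigma>: "\<And>x a. v1 x = Some a \<Longrightarrow> v2 x = Some (\<sigma> a)" by blast
  have "\<exists>\<tau>. \<forall>x c. v2 x = Some c \<longrightarrow> v1 x = Some (\<tau> c)"
    by (rule value_map_if_same_order[OF v2 v1]) (rule same_order[symmetric])
  then obtain \<tau> where \<tau>: "\<And>x c. v2 x = Some c \<Longrightarrow> v1 x = Some (\<tau> c)" by blast
  show ?thesis unfolding equivalent_valuations_def
  proof (intro exI[of _ \<sigma>] conjI ballI impI allI)
    show "bij_betw \<sigma> (gcarrier G1) (gcarrier G2)"
    proof (rule bij_betw_byWitness[where f' = \<tau>])
      show "\<forall>a\<in>gcarrier G1. \<tau> (\<sigma> a) = a" using V1.val_surj \<sigma> \<tau> by fastforce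
      show "\<forall>c\<in>gcarrier G2. \<sigma> (\<tau> c) = c" using V2.val_surj \<sigma> \<tau> by fastforce
      show "\<sigma> ` gcarrier G1 \<subseteq> gcarrier G2" using V1.val_surj \<sigma> V2.val_Some_closed by blast
      show "\<tau> ` gcarrier G2 \<subseteq> gcarrier G1" using V2.val_surj \<tau> V1.val_Some_closed by blast
    qed
  next
    fix a b assume "a \<in> gcarrier G1" "b \<in> gcarrier G1"
    then obtain x y where xy: "v1 x = Some a" "v1 y = Some b" using V1.val_surj by blast
    have "v2 (mul x y) = Some (\<sigma> (gplus G1 a b))" using \<sigma> V1.val_mul_Some[OF xy] by blast
    moreover have "v2 (mul x y) = Some (gplus G2 (\<sigma> a) (\<sigma> b))"
      using V2.val_mul_Some \<sigma>[OF xy(1)] \<sigma>[OF xy(2)] by blast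
    ultimately show "\<sigma> (gplus G1 a b) = gplus G2 (\<sigma> a) (\<sigma> b)" by simp
    show "gle G2 (\<sigma> a) (\<sigma> b)" if "gle G1 a b"
      using same_order[OF xy \<sigma>[OF xy(1)] \<sigma>[OF xy(2)]] that by blast
  next
    fix x show "v2 x = map_option \<sigma> (v1 x)"
      using \<sigma> \<tau>[of x] by (cases "v1 x"; cases "v2 x") auto
  qed
qed

section \<open>Uniqueness\<close>

locale krasner_valued = sc_hyperfield hadd z mul one + valued G hadd mul z v
  for hadd :: "'a \<Rightarrow> 'a \<Rightarrow> 'a set" (infixl "\<oplus>" 65) and z :: 'a
    and mul :: "'a \<Rightarrow> 'a \<Rightarrow> 'a" (infixl "\<cdot>" 70) and one :: 'a
    and G :: "'g ogroup" and v :: "'a \<Rightarrow> 'g option" +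
  fixes \<rho> :: "'g set"
  assumes krasner: "krasner_valuation hadd mul z G v \<rho>"
    and ig_norm: "ig G \<rho> = {gzero G}"
begin

lemma norm_initial_segment: "initial_segment G (value_group z v) \<rho>"
  using krasner unfolding krasner_valuation_def by (elim conjE)

lemma mem_hadd_iff_krasner:
  assumes "w \<in> x \<oplus> y" and "ext_min G (v x) (v y) = Some \<gamma>"
  shows "t \<in> x \<oplus> y \<longleftrightarrow> (\<forall>s\<in>hsub hadd z w t. v s \<notin> Some ` seg_shift G \<rho> \<gamma>)"
proof -
  have "\<forall>x y w t \<gamma>. w \<in> x \<oplus> y \<longrightarrow> ext_min G (v x) (v y) = Some \<gamma> \<longrightarrow>
      (t \<in> x \<oplus> y \<longleftrightarrow> (\<forall>s\<in>hsub hadd z w t. v s \<notin> Some ` seg_shift G \<rho> \<gamma>))"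
    using krasner unfolding krasner_valuation_def by (elim conjE)
  then show ?thesis using assms by blast
qed

lemma norm_initial_segment_carrier: "initial_segment G (gcarrier G) \<rho>"
  using norm_initial_segment unfolding value_group_eq .

lemma norm_subset_carrier: "\<rho> \<subseteq> gcarrier G"
  using norm_initial_segment_carrier unfolding initial_segment_def by blast

lemma val_one: "v one = Some (gzero G)"
proof -
  obtain a where a: "a \<in> gcarrier G" "v one = Some a" using val_nonzero one_neq_zero by blast
  have "a +\<^sub>G a = gzero G +\<^sub>G a" using val_mul_Some[OF a(2) a(2)] a by (simp add: gadd_zero_left)
  then show ?thesis using gadd_right_cancel[OF a(1) gzero_closed a(1)] a(2) by simp
qed

lemma val_neg_one: "v (neg one) = Some (gzero G)"
proof -
  have "neg one \<noteq> z"
  proof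
    assume "neg one = z"
    then have "neg (neg one) = neg z" by (rule arg_cong)
    then show False using one_neq_zero by simp
  qed
  then obtain a where a: "a \<in> gcarrier G" "v (neg one) = Some a" using val_nonzero by blast
  have "neg one \<cdot> neg one = one" by (simp add: mul_neg_one)
  then have "a +\<^sub>G a = gzero G" using val_mul_Some[OF a(2) a(2)] val_one by simp
  then show ?thesis using double_eq_zero a by simp
qed

lemma val_neg: "v (neg x) = v x"
proof (cases "x = z")
  case False
  then obtain a where a: "a \<in> gcarrier G" "v x = Some a" using val_nonzero by blast
  then show ?thesis
    using val_mul_Some[OF val_neg_one a(2)] by (simp add: mul_neg_one gadd_zero_left)
qed simp

lemma mem_ball_iff_val: "v x = Some a \<Longrightarrow> t \<in> ball x \<longleftrightarrow> v t \<notin> Some ` seg_shift G \<rho> a"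
proof -
  assume a: "v x = Some a"
  have "a \<in> gcarrier G" using a by (rule val_Some_closed)
  then have "ext_min G (v x) (v (neg x)) = Some a"
    using a val_neg gle_refl by (simp add: ext_min_def ext_le_def)
  from mem_hadd_iff_krasner[OF zero_in_hadd_neg this, of t]
  show ?thesis unfolding hsub_def by (simp add: val_neg)
qed

lemma ball_subset_iff_le:
  assumes a: "v x = Some a" and b: "v y = Some b"
  shows "ball y \<subseteq> ball x \<longleftrightarrow> a \<le>\<^sub>G b"
proof -
  have ac: "a \<in> gcarrier G" and bc: "b \<in> gcarrier G" using a b val_Some_closed by blast+
  have "ball y \<subseteq> ball x \<longleftrightarrow> seg_shift G \<rho> a \<subseteq> seg_shift G \<rho> b"
  proof
    assume sub: "ball y \<subseteq> ball x"
    show "seg_shift G \<rho> a \<subseteq> seg_shift G \<rho> b"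
    proof
      fix \<alpha> assume \<alpha>: "\<alpha> \<in> seg_shift G \<rho> a"
      then have "\<alpha> \<in> gcarrier G" using seg_shift_closed[OF norm_subset_carrier ac] by blast
      then obtain t where t: "v t = Some \<alpha>" using val_surj by blast
      then have "t \<notin> ball x" using mem_ball_iff_val[OF a, of t] \<alpha> by auto
      then have "t \<notin> ball y" using sub by blast
      then show "\<alpha> \<in> seg_shift G \<rho> b" using mem_ball_iff_val[OF b, of t] t by auto
    qed
  qed (use mem_ball_iff_val[OF a] mem_ball_iff_val[OF b] in blast)
  also have "\<dots> \<longleftrightarrow> a \<le>\<^sub>G b"
    by (rule seg_shift_subset_iff[OF norm_initial_segment_carrier ig_norm ac bc])
  finally show ?thesis .
qed

end

lemma krasner_valuedI:
  assumes "sc_hyperfield hadd z mul one" and "krasner_valuation hadd mul z G v \<rho>"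
    and "ig G \<rho> = {gzero G}"
  shows "krasner_valued hadd z mul one G v \<rho>"
proof -
  have "valuation hadd mul z G v" using assms(2) unfolding krasner_valuation_def by (rule conjunct1)
  then show ?thesis using assms by (intro krasner_valued.intro valuedI krasner_valued_axioms.intro)
qed

lemma (in sc_hyperfield) krasner_valuations_equivalent:
  assumes "krasner_valuation hadd mul z G1 v1 \<rho>1" and "ig G1 \<rho>1 = {gzero G1}"
    and "krasner_valuation hadd mul z G2 v2 \<rho>2" and "ig G2 \<rho>2 = {gzero G2}"
  shows "equivalent_valuations G1 v1 G2 v2"
proof -
  interpret K1: krasner_valued hadd z mul one G1 v1 \<rho>1
    using sc_hyperfield_axioms assms(1,2) by (rule krasner_valuedI)
  interpret K2: krasner_valued hadd z mul one G2 v2 \<rho>2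
    using sc_hyperfield_axioms assms(3,4) by (rule krasner_valuedI)
  show ?thesis
    using K1.valuation K2.valuation
  proof (rule equivalent_valuations_if_same_order)
    fix x y a b c d
    assume "v1 x = Some a" "v1 y = Some b" "v2 x = Some c" "v2 y = Some d"
    then show "gle G1 a b \<longleftrightarrow> gle G2 c d"
      using K1.ball_subset_iff_le[of x a y b] K2.ball_subset_iff_le[of x c y d] by simp
  qed
qed

theorem corollary6p6:
  fixes hadd :: "'a \<Rightarrow> 'a \<Rightarrow> 'a set" and mul :: "'a \<Rightarrow> 'a \<Rightarrow> 'a" and z one :: 'a
  assumes "hyperfield hadd mul z one"
    and "superiorly_canonical hadd z"
  shows "(\<exists>(G :: 'a set ogroup) v \<rho>. krasner_valuation hadd mul z G v \<rho> \<and> ig G \<rho> = {gzero G})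
       \<and> (\<forall>(G1 :: 'g ogroup) v1 \<rho>1 (G2 :: 'h ogroup) v2 \<rho>2.
            krasner_valuation hadd mul z G1 v1 \<rho>1 \<and> ig G1 \<rho>1 = {gzero G1} \<and>
            krasner_valuation hadd mul z G2 v2 \<rho>2 \<and> ig G2 \<rho>2 = {gzero G2}
            \<longrightarrow> equivalent_valuations G1 v1 G2 v2)"
proof -
  interpret sc_hyperfield hadd z mul one using assms by (rule sc_hyperfieldI)
  show ?thesis
  proof (intro conjI allI impI)
    show "\<exists>(G :: 'a set ogroup) v \<rho>. krasner_valuation hadd mul z G v \<rho> \<and> ig G \<rho> = {gzero G}"
      using krasner_canonical_valuation ig_canonical_norm by fastforce
  qed (elim conjE, rule krasner_valuations_equivalent)
qed

end
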